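(* For every positive integer $t$ and every finite graph $G$ of cliquewidth at most $t$, the hypergraph of balls in $G$ has a proper array sample compression scheme of size $4t+3$.
   Context: For a hypergraph $H$ (finite $V(H)$, $E(H)\subseteq 2^{V(H)}$): a sample is a pair $(X^+,X^-)$ of subsets of $V(H)$ such that some hyperedge $e$ has $X^+\subseteq e$, $X^-\cap e=\emptyset$; $\mathcal{S}(H)$ is the set of samples; $S$ realizes $(X^+,X^-)$ if $X^+\subseteq S$ and $S\cap X^-=\emptyset$. With a fresh symbol $\bot\notin V(H)$, an array sample compression scheme of size $k$ is a pair $(\kappa,\rho)$, $\kappa:\mathcal{S}(H)\to(V(H)\cup\{\bot\})^k$, $\rho:(V(H)\cup\{\bot\})^k\to 2^{V(H)}$, such that for every sample, $\kappa(X^+,X^-)\in(X^+\cup X^-\cup\{\bot\})^k$ and $\rho(\kappa(X^+,X^-))$ realizes $(X^+,X^-)$; it is proper if all values of $\rho$ are hyperedges. The hypergraph of balls in $G$ has vertex set $V(G)$ and hyperedges all $B_G(c,r)=\{v:\mathrm{dist}_G(c,v)\le r\}$, $c\in V(G)$, $r$ an integer. The cliquewidth of $G$ is the minimum $k$ such that $G$ can be built with labels in $[k]$ using: creation of a single labeled vertex; disjoint union; for labels $i\ne j$, adding all edges between label-$i$ and label-$j$ vertices; relabeling label $i$ to $j$. *)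

theory Defs
  imports Main
begin

definition finite_graph :: "'a set \<Rightarrow> ('a \<times> 'a) set \<Rightarrow> bool" where
  "finite_graph V E \<longleftrightarrow> finite V \<and> V \<noteq> {} \<and> E \<subseteq> V \<times> V \<and> sym E \<and> irrefl E"

definition realizes :: "'a set \<Rightarrow> 'a set \<times> 'a set \<Rightarrow> bool" where
  "realizes S X \<longleftrightarrow> fst X \<subseteq> S \<and> S \<inter> snd X = {}"

definition samples :: "'a set \<Rightarrow> 'a set set \<Rightarrow> ('a set \<times> 'a set) set" where
  "samples V Es = {(Xp, Xm). Xp \<subseteq> V \<and> Xm \<subseteq> V \<and> (\<exists>e\<in>Es. Xp \<subseteq> e \<and> Xm \<inter> e = {})}"

(* Arrays of length k over V \<union> {\<bottom>}: lists of length k over 'a option, None playing \<bottom>. *)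
definition arrays :: "nat \<Rightarrow> 'a set \<Rightarrow> 'a option list set" where
  "arrays k A = {a. length a = k \<and> set a \<subseteq> Some ` A \<union> {None}}"

definition array_sample_compression_scheme ::
  "'a set \<Rightarrow> 'a set set \<Rightarrow> nat \<Rightarrow> ('a set \<times> 'a set \<Rightarrow> 'a option list) \<Rightarrow> ('a option list \<Rightarrow> 'a set) \<Rightarrow> bool" where
  "array_sample_compression_scheme V Es k \<kappa> \<rho> \<longleftrightarrow>
     (\<forall>a\<in>arrays k V. \<rho> a \<subseteq> V) \<and>
     (\<forall>X\<in>samples V Es. \<kappa> X \<in> arrays k (fst X \<union> snd X) \<and> realizes (\<rho> (\<kappa> X)) X)"

definition proper_array_sample_compression_scheme ::
  "'a set \<Rightarrow> 'a set set \<Rightarrow> nat \<Rightarrow> ('a set \<times> 'a set \<Rightarrow> 'a option list) \<Rightarrow> ('a option list \<Rightarrow> 'a set) \<Rightarrow> bool" where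
  "proper_array_sample_compression_scheme V Es k \<kappa> \<rho> \<longleftrightarrow>
     array_sample_compression_scheme V Es k \<kappa> \<rho> \<and> (\<forall>a\<in>arrays k V. \<rho> a \<in> Es)"

definition ball :: "'a set \<Rightarrow> ('a \<times> 'a) set \<Rightarrow> 'a \<Rightarrow> int \<Rightarrow> 'a set" where
  "ball V E c r = {v\<in>V. r \<ge> 0 \<and> (\<exists>k\<le>nat r. (c, v) \<in> E ^^ k)}"

definition ball_hyperedges :: "'a set \<Rightarrow> ('a \<times> 'a) set \<Rightarrow> 'a set set" where
  "ball_hyperedges V E = {ball V E c r | c r. c \<in> V}"

inductive cw_build :: "nat \<Rightarrow> 'a set \<Rightarrow> ('a \<times> 'a) set \<Rightarrow> ('a \<Rightarrow> nat) \<Rightarrow> bool" for k where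
  create: "i \<in> {1..k} \<Longrightarrow> cw_build k {v} {} (\<lambda>_. i)"
| union: "cw_build k V1 E1 l1 \<Longrightarrow> cw_build k V2 E2 l2 \<Longrightarrow> V1 \<inter> V2 = {} \<Longrightarrow>
          cw_build k (V1 \<union> V2) (E1 \<union> E2) (\<lambda>x. if x \<in> V1 then l1 x else l2 x)"
| join: "cw_build k V E l \<Longrightarrow> i \<in> {1..k} \<Longrightarrow> j \<in> {1..k} \<Longrightarrow> i \<noteq> j \<Longrightarrow>
          cw_build k V (E \<union> {(x, y). x \<in> V \<and> y \<in> V \<and> ((l x = i \<and> l y = j) \<or> (l x = j \<and> l y = i))}) l"
| relabel: "cw_build k V E l \<Longrightarrow> i \<in> {1..k} \<Longrightarrow> j \<in> {1..k} \<Longrightarrow>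
          cw_build k V E (\<lambda>x. if l x = i then j else l x)"

definition cliquewidth :: "'a set \<Rightarrow> ('a \<times> 'a) set \<Rightarrow> nat" where
  "cliquewidth V E = (LEAST k. \<exists>l. cw_build k V E l)"

end

theory Submission
  imports Defs "HOL-Library.Extended_Nat"
begin

text \<open>A clique-width expression of width \<open>t\<close> yields a laminar hierarchy of vertex sets (those of its
  subexpressions) in which, for every node \<open>N\<close>, vertices of \<open>N\<close> that carried the same label when \<open>N\<close>
  was completed have the same neighbours outside \<open>N\<close>. Let a sample be realized by the ball of radius
  \<open>R\<close> around \<open>c\<close>. If \<open>c\<close> is a sample point, store \<open>c\<close> and the farthest positive point. Otherwise
  there are nodes \<open>A\<close> and \<open>B\<close>, each named by at most two sample points, with \<open>c \<in> A - B\<close> and no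
  sample point in \<open>A - B\<close>. Every edge leaving \<open>A - B\<close> lies in one of \<open>2t\<close> complete bipartite graphs
  \<open>P k \<times> Q k\<close> (a label class of \<open>A\<close> with its outer neighbourhood, or a label class of \<open>B\<close> with its
  outer neighbourhood), so the distance from \<open>c\<close> to a point \<open>w\<close> outside \<open>A - B\<close> is the minimum
  over \<open>k\<close> of \<open>d(c, P k) + 1 + d(Q k, w)\<close>, where only the last term depends on \<open>w\<close>. Hence it
  suffices to store, for each \<open>k\<close>, the positive point reached within the radius through \<open>k\<close> that
  is farthest from \<open>Q k\<close>, and the negative point closest to \<open>Q k\<close>: any centre in \<open>A - B\<close> and radius
  that treat these \<open>4t\<close> witnesses correctly realize the sample. With the three names this gives
  \<open>4t + 3\<close>.\<close>

section \<open>Graph distance and balls\<close>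

lemma INF_enat_attained:
  fixes f :: "'b \<Rightarrow> enat"
  assumes "S \<noteq> {}"
  shows "\<exists>a\<in>S. (INF x\<in>S. f x) = f a"
proof -
  obtain a where "a \<in> S" using assms by blast
  then have "(INF x\<in>S. f x) \<in> f ` S" by (intro wellorder_InfI[of "f a"]) simp
  then show ?thesis by auto
qed

definition gdist :: "('a \<times> 'a) set \<Rightarrow> 'a \<Rightarrow> 'a \<Rightarrow> enat" where
  "gdist E u v = (INF n\<in>{n. (u, v) \<in> E ^^ n}. enat n)"

lemma gdist_le: "(u, v) \<in> E ^^ n \<Longrightarrow> gdist E u v \<le> enat n"
  unfolding gdist_def by (rule INF_lower) simp

lemma gdist_le_iff: "gdist E u v \<le> enat m \<longleftrightarrow> (\<exists>n\<le>m. (u, v) \<in> E ^^ n)"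
proof
  assume le: "gdist E u v \<le> enat m"
  have "{n. (u, v) \<in> E ^^ n} \<noteq> {}"
  proof
    assume "{n. (u, v) \<in> E ^^ n} = {}"
    then have "gdist E u v = \<infinity>" by (simp add: gdist_def top_enat_def)
    with le show False by simp
  qed
  then obtain n where "(u, v) \<in> E ^^ n" "gdist E u v = enat n"
    using INF_enat_attained[of "{n. (u, v) \<in> E ^^ n}" enat] unfolding gdist_def by auto
  with le show "\<exists>n\<le>m. (u, v) \<in> E ^^ n" by auto
next
  assume "\<exists>n\<le>m. (u, v) \<in> E ^^ n"
  then obtain n where "n \<le> m" "(u, v) \<in> E ^^ n" by blast
  then have "gdist E u v \<le> enat n" by (intro gdist_le)
  also have "\<dots> \<le> enat m" using \<open>n \<le> m\<close> by simp
  finally show "gdist E u v \<le> enat m" .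
qed

lemma mem_ball_iff: "v \<in> ball V E c r \<longleftrightarrow> v \<in> V \<and> 0 \<le> r \<and> gdist E c v \<le> enat (nat r)"
  unfolding ball_def by (auto simp: gdist_le_iff)

lemma realizes_ball_iff:
  assumes "Xp \<union> Xm \<subseteq> V"
  shows "realizes (ball V E c (int r)) (Xp, Xm) \<longleftrightarrow>
    (\<forall>x\<in>Xp. gdist E c x \<le> enat r) \<and> (\<forall>y\<in>Xm. enat r < gdist E c y)"
proof -
  have "x \<in> ball V E c (int r) \<longleftrightarrow> gdist E c x \<le> enat r" if "x \<in> Xp \<union> Xm" for x
    using that assms by (auto simp: mem_ball_iff)
  then have "Xp \<subseteq> ball V E c (int r) \<longleftrightarrow> (\<forall>x\<in>Xp. gdist E c x \<le> enat r)"
    and "(\<forall>y\<in>Xm. y \<notin> ball V E c (int r)) \<longleftrightarrow> (\<forall>y\<in>Xm. enat r < gdist E c y)"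
    by (auto simp: not_le)
  moreover have "ball V E c (int r) \<inter> Xm = {} \<longleftrightarrow> (\<forall>y\<in>Xm. y \<notin> ball V E c (int r))" by blast
  ultimately show ?thesis unfolding realizes_def by simp
qed

lemma gdist_le_via_edge:
  assumes "(a, b) \<in> E"
  shows "gdist E c w \<le> gdist E c a + 1 + gdist E b w"
proof (cases "gdist E c a = \<infinity> \<or> gdist E b w = \<infinity>")
  case False
  then obtain n1 n2 where "gdist E c a = enat n1" "gdist E b w = enat n2" by auto
  then obtain m1 m2 where m: "m1 \<le> n1" "(c, a) \<in> E ^^ m1" "m2 \<le> n2" "(b, w) \<in> E ^^ m2"
    using gdist_le_iff[of E c a n1] gdist_le_iff[of E b w n2] by auto
  with assms have "(c, w) \<in> E ^^ (Suc m1 + m2)"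
    unfolding relpow_add by (blast intro: relpow_Suc_I)
  then have "gdist E c w \<le> enat (Suc m1 + m2)" by (rule gdist_le)
  also have "\<dots> \<le> gdist E c a + 1 + gdist E b w"
    using m \<open>gdist E c a = enat n1\<close> \<open>gdist E b w = enat n2\<close> by (simp add: one_enat_def)
  finally show ?thesis .
qed auto

lemma relpow_exit_edge:
  assumes "(c, w) \<in> E ^^ n" "c \<in> Z" "w \<notin> Z"
  shows "\<exists>n1 n2 z y. (c, z) \<in> E ^^ n1 \<and> (z, y) \<in> E \<and> z \<in> Z \<and> y \<notin> Z \<and> (y, w) \<in> E ^^ n2 \<and> n1 + 1 + n2 = n"
  using assms(1,3)
proof (induction n arbitrary: w)
  case 0
  with assms(2) show ?case by auto
next
  case (Suc n)
  then obtain m where m: "(c, m) \<in> E ^^ n" "(m, w) \<in> E" by auto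
  show ?case
  proof (cases "m \<in> Z")
    case True
    with m Suc.prems(2) show ?thesis by (metis add.right_neutral relpow_0_I Suc_eq_plus1)
  next
    case False
    then obtain n1 n2 z y where "(c, z) \<in> E ^^ n1" "(z, y) \<in> E" "z \<in> Z" "y \<notin> Z"
      "(y, m) \<in> E ^^ n2" "n1 + 1 + n2 = n"
      using Suc.IH[OF m(1)] by blast
    moreover from \<open>(y, m) \<in> E ^^ n2\<close> m(2) have "(y, w) \<in> E ^^ Suc n2" by (rule relpow_Suc_I)
    ultimately show ?thesis by (metis add_Suc_right)
  qed
qed

lemma option_in_alphabet: "set_option xo \<subseteq> A \<Longrightarrow> xo \<in> Some ` A \<union> {None}"
  by (cases xo) auto

lemma empty_in_ball_hyperedges:
  assumes "V \<noteq> {}"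
  shows "{} \<in> ball_hyperedges V E"
proof -
  obtain v where "v \<in> V" using assms by blast
  moreover have "ball V E v (-1) = {}" unfolding ball_def by simp
  ultimately show ?thesis unfolding ball_hyperedges_def by blast
qed

lemma ball_in_ball_hyperedges:
  assumes "V \<noteq> {}" "E \<subseteq> V \<times> V"
  shows "ball V E c r \<in> ball_hyperedges V E"
proof (cases "c \<in> V")
  case True
  then show ?thesis unfolding ball_hyperedges_def by blast
next
  case False
  have "ball V E c r = {}"
  proof (rule ccontr)
    assume "ball V E c r \<noteq> {}"
    then obtain v k where "v \<in> V" "(c, v) \<in> E ^^ k" unfolding ball_def by blast
    then show False
    proof (cases k)
      case 0
      with \<open>(c, v) \<in> E ^^ k\<close> \<open>v \<in> V\<close> False show False by simp
    next
      case (Suc n)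
      with \<open>(c, v) \<in> E ^^ k\<close> obtain y where "(c, y) \<in> E"
        using relpow_Suc_D2[of c v n E] by blast
      with False assms(2) show False by blast
    qed
  qed
  with empty_in_ball_hyperedges[OF assms(1)] show ?thesis by simp
qed

lemma proper_scheme_from_decoder:
  assumes "\<And>a. \<rho> a \<in> Es" "\<And>e. e \<in> Es \<Longrightarrow> e \<subseteq> V"
    and "\<And>X. X \<in> samples V Es \<Longrightarrow> \<exists>a\<in>arrays k (fst X \<union> snd X). realizes (\<rho> a) X"
  shows "\<exists>\<kappa>. proper_array_sample_compression_scheme V Es k \<kappa> \<rho>"
proof -
  define \<kappa> where "\<kappa> X = (SOME a. a \<in> arrays k (fst X \<union> snd X) \<and> realizes (\<rho> a) X)" for X
  have "\<kappa> X \<in> arrays k (fst X \<union> snd X) \<and> realizes (\<rho> (\<kappa> X)) X" if "X \<in> samples V Es" for X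
    unfolding \<kappa>_def using assms(3)[OF that] by (rule someI2_bex) simp
  moreover have "\<rho> a \<subseteq> V" for a using assms(1,2) by blast
  ultimately have "proper_array_sample_compression_scheme V Es k \<kappa> \<rho>"
    unfolding proper_array_sample_compression_scheme_def array_sample_compression_scheme_def
    using assms(1) by blast
  then show ?thesis by blast
qed

section \<open>Distances through a biclique cut\<close>

definition gdist_to :: "('a \<times> 'a) set \<Rightarrow> 'a \<Rightarrow> 'a set \<Rightarrow> enat" where
  "gdist_to E c P = (INF a\<in>P. gdist E c a)"

definition gdist_from :: "('a \<times> 'a) set \<Rightarrow> 'a set \<Rightarrow> 'a \<Rightarrow> enat" where
  "gdist_from E Q w = (INF b\<in>Q. gdist E b w)"

definition gdist_via :: "('a \<times> 'a) set \<Rightarrow> 'a set \<Rightarrow> 'a set \<Rightarrow> 'a \<Rightarrow> 'a \<Rightarrow> enat" where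
  "gdist_via E P Q c w = gdist_to E c P + 1 + gdist_from E Q w"

lemma gdist_le_gdist_via:
  assumes "P \<times> Q \<subseteq> E"
  shows "gdist E c w \<le> gdist_via E P Q c w"
proof (cases "P = {} \<or> Q = {}")
  case True
  then have "gdist_via E P Q c w = \<infinity>"
    by (auto simp: gdist_via_def gdist_to_def gdist_from_def top_enat_def)
  then show ?thesis by simp
next
  case False
  then obtain a b where "a \<in> P" "gdist_to E c P = gdist E c a" "b \<in> Q" "gdist_from E Q w = gdist E b w"
    using INF_enat_attained[of P "gdist E c"] INF_enat_attained[of Q "\<lambda>b. gdist E b w"]
    unfolding gdist_to_def gdist_from_def by auto
  moreover from this assms have "(a, b) \<in> E" by blast
  ultimately show ?thesis
    unfolding gdist_via_def by (simp add: gdist_le_via_edge)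
qed

lemma gdist_via_le:
  assumes "(c, z) \<in> E ^^ n1" "z \<in> P" "y \<in> Q" "(y, w) \<in> E ^^ n2"
  shows "gdist_via E P Q c w \<le> enat (n1 + 1 + n2)"
proof -
  have "gdist_to E c P \<le> gdist E c z"
    unfolding gdist_to_def using assms(2) by (rule INF_lower)
  also have "\<dots> \<le> enat n1" using assms(1) by (rule gdist_le)
  finally have to_le: "gdist_to E c P \<le> enat n1" .
  have "gdist_from E Q w \<le> gdist E y w"
    unfolding gdist_from_def using assms(3) by (rule INF_lower)
  also have "\<dots> \<le> enat n2" using assms(4) by (rule gdist_le)
  finally have from_le: "gdist_from E Q w \<le> enat n2" .
  from to_le from_le have "gdist_via E P Q c w \<le> enat n1 + 1 + enat n2"
    unfolding gdist_via_def by (intro add_mono) simp_all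
  then show ?thesis by (simp add: one_enat_def)
qed

lemma gdist_via_mono:
  "gdist_from E Q w \<le> gdist_from E Q w' \<Longrightarrow> gdist_via E P Q c w \<le> gdist_via E P Q c w'"
  unfolding gdist_via_def by (simp add: add_left_mono)

definition biclique_cut :: "('a \<times> 'a) set \<Rightarrow> 'a set \<Rightarrow> ('i \<Rightarrow> 'a set) \<Rightarrow> ('i \<Rightarrow> 'a set) \<Rightarrow> 'i set \<Rightarrow> bool" where
  "biclique_cut E Z P Q K \<longleftrightarrow>
     (\<forall>k\<in>K. P k \<times> Q k \<subseteq> E) \<and> (\<forall>z\<in>Z. \<forall>y. y \<notin> Z \<longrightarrow> (z, y) \<in> E \<longrightarrow> (\<exists>k\<in>K. z \<in> P k \<and> y \<in> Q k))"

lemma gdist_le_iff_via_cut: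
  assumes cut: "biclique_cut E Z P Q K" and "c \<in> Z" "w \<notin> Z"
  shows "gdist E c w \<le> enat r \<longleftrightarrow> (\<exists>k\<in>K. gdist_via E (P k) (Q k) c w \<le> enat r)"
proof
  assume "gdist E c w \<le> enat r"
  then obtain n where "n \<le> r" "(c, w) \<in> E ^^ n" by (auto simp: gdist_le_iff)
  then obtain n1 n2 z y where walk: "(c, z) \<in> E ^^ n1" "(z, y) \<in> E" "z \<in> Z" "y \<notin> Z"
    "(y, w) \<in> E ^^ n2" "n1 + 1 + n2 = n"
    using relpow_exit_edge[of c w n E Z] assms(2,3) by blast
  with cut obtain k where "k \<in> K" "z \<in> P k" "y \<in> Q k"
    unfolding biclique_cut_def by blast
  with walk have "gdist_via E (P k) (Q k) c w \<le> enat n"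
    using gdist_via_le[OF walk(1) _ _ walk(5)] by simp
  with \<open>n \<le> r\<close> \<open>k \<in> K\<close> show "\<exists>k\<in>K. gdist_via E (P k) (Q k) c w \<le> enat r"
    by (meson enat_ord_simps(1) order_trans)
next
  assume "\<exists>k\<in>K. gdist_via E (P k) (Q k) c w \<le> enat r"
  then obtain k where "k \<in> K" and le: "gdist_via E (P k) (Q k) c w \<le> enat r" by blast
  with cut have "gdist E c w \<le> gdist_via E (P k) (Q k) c w"
    unfolding biclique_cut_def by (simp add: gdist_le_gdist_via)
  also note le
  finally show "gdist E c w \<le> enat r" .
qed

section \<open>Compression through a biclique cut\<close>

definition cut_consistent :: "('a \<times> 'a) set \<Rightarrow> ('i \<Rightarrow> 'a set) \<Rightarrow> ('i \<Rightarrow> 'a set) \<Rightarrow> 'i set \<Rightarrow>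
    ('i \<Rightarrow> 'a option) \<Rightarrow> ('i \<Rightarrow> 'a option) \<Rightarrow> 'a \<Rightarrow> nat \<Rightarrow> bool" where
  "cut_consistent E P Q K px ny c r \<longleftrightarrow>
     (\<forall>k\<in>K. (\<forall>x\<in>set_option (px k). gdist_via E (P k) (Q k) c x \<le> enat r) \<and>
            (\<forall>y\<in>set_option (ny k). enat r < gdist_via E (P k) (Q k) c y))"

lemma cut_consistent_cong:
  assumes "\<And>k. k \<in> K \<Longrightarrow> px k = px' k" "\<And>k. k \<in> K \<Longrightarrow> ny k = ny' k"
  shows "cut_consistent E P Q K px ny c r = cut_consistent E P Q K px' ny' c r"
  using assms unfolding cut_consistent_def by simp

lemma ex_arg_max_selector:
  fixes f :: "'i \<Rightarrow> 'a \<Rightarrow> 'b::linorder"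
  assumes "\<And>k. finite (S k)"
  obtains sel where "\<And>k. set_option (sel k) \<subseteq> S k"
    and "\<And>k x. x \<in> S k \<Longrightarrow> \<exists>x'\<in>set_option (sel k). f k x \<le> f k x'"
proof -
  have "\<exists>xo. set_option xo \<subseteq> S k \<and> (\<forall>x\<in>S k. \<exists>x'\<in>set_option xo. f k x \<le> f k x')" for k
  proof (cases "S k = {}")
    case False
    with assms have "Max (f k ` S k) \<in> f k ` S k" by (intro Max_in) auto
    then obtain x' where "x' \<in> S k" "f k x' = Max (f k ` S k)" by auto
    with assms show ?thesis by (intro exI[of _ "Some x'"]) simp
  qed simp
  then have "\<forall>k. \<exists>xo. set_option xo \<subseteq> S k \<and> (\<forall>x\<in>S k. \<exists>x'\<in>set_option xo. f k x \<le> f k x')" ..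
  from choice[OF this] obtain sel where
    "\<forall>k. set_option (sel k) \<subseteq> S k \<and> (\<forall>x\<in>S k. \<exists>x'\<in>set_option (sel k). f k x \<le> f k x')"
    by blast
  with that show thesis by blast
qed

lemma ex_arg_min_selector:
  fixes f :: "'i \<Rightarrow> 'a \<Rightarrow> 'b::linorder"
  assumes "\<And>k. finite (S k)"
  obtains sel where "\<And>k. set_option (sel k) \<subseteq> S k"
    and "\<And>k x. x \<in> S k \<Longrightarrow> \<exists>x'\<in>set_option (sel k). f k x' \<le> f k x"
proof -
  have "\<exists>xo. set_option xo \<subseteq> S k \<and> (\<forall>x\<in>S k. \<exists>x'\<in>set_option xo. f k x' \<le> f k x)" for k
  proof (cases "S k = {}")
    case False
    with assms have "Min (f k ` S k) \<in> f k ` S k" by (intro Min_in) auto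
    then obtain x' where "x' \<in> S k" "f k x' = Min (f k ` S k)" by auto
    with assms show ?thesis by (intro exI[of _ "Some x'"]) simp
  qed simp
  then have "\<forall>k. \<exists>xo. set_option xo \<subseteq> S k \<and> (\<forall>x\<in>S k. \<exists>x'\<in>set_option xo. f k x' \<le> f k x)" ..
  from choice[OF this] obtain sel where
    "\<forall>k. set_option (sel k) \<subseteq> S k \<and> (\<forall>x\<in>S k. \<exists>x'\<in>set_option (sel k). f k x' \<le> f k x)"
    by blast
  with that show thesis by blast
qed

lemma cut_witnesses_exist:
  assumes cut: "biclique_cut E Z P Q K" and "finite Xp" "finite Xm" "c \<in> Z" "Xp \<inter> Z = {}"
    and pos: "\<forall>x\<in>Xp. gdist E c x \<le> enat R" and neg: "\<forall>y\<in>Xm. enat R < gdist E c y"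
  obtains px ny where "\<And>k. set_option (px k) \<subseteq> Xp" "\<And>k. set_option (ny k) \<subseteq> Xm"
    and "cut_consistent E P Q K px ny c R"
    and "\<And>x. x \<in> Xp \<Longrightarrow> \<exists>k\<in>K. \<exists>x'\<in>set_option (px k). gdist_from E (Q k) x \<le> gdist_from E (Q k) x'"
    and "\<And>y k. y \<in> Xm \<Longrightarrow> \<exists>y'\<in>set_option (ny k). gdist_from E (Q k) y' \<le> gdist_from E (Q k) y"
proof -
  define reached where "reached k = {x\<in>Xp. gdist_via E (P k) (Q k) c x \<le> enat R}" for k
  have "finite (reached k)" for k using \<open>finite Xp\<close> by (simp add: reached_def)
  then obtain px where px: "\<And>k. set_option (px k) \<subseteq> reached k"
    "\<And>k x. x \<in> reached k \<Longrightarrow> \<exists>x'\<in>set_option (px k). gdist_from E (Q k) x \<le> gdist_from E (Q k) x'"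
    by (rule ex_arg_max_selector) (rule that)
  obtain ny where ny: "\<And>k. set_option (ny k) \<subseteq> Xm"
    "\<And>k y. y \<in> Xm \<Longrightarrow> \<exists>y'\<in>set_option (ny k). gdist_from E (Q k) y' \<le> gdist_from E (Q k) y"
    using \<open>finite Xm\<close> by (rule ex_arg_min_selector) (rule that)
  have "cut_consistent E P Q K px ny c R"
    unfolding cut_consistent_def
  proof (intro ballI conjI)
    fix k x assume "x \<in> set_option (px k)"
    with px(1) show "gdist_via E (P k) (Q k) c x \<le> enat R" unfolding reached_def by blast
  next
    fix k y assume "k \<in> K" "y \<in> set_option (ny k)"
    with ny(1) neg have "enat R < gdist E c y" by blast
    also have "\<dots> \<le> gdist_via E (P k) (Q k) c y"
      using cut \<open>k \<in> K\<close> unfolding biclique_cut_def by (simp add: gdist_le_gdist_via)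
    finally show "enat R < gdist_via E (P k) (Q k) c y" .
  qed
  moreover have "\<exists>k\<in>K. \<exists>x'\<in>set_option (px k). gdist_from E (Q k) x \<le> gdist_from E (Q k) x'"
    if "x \<in> Xp" for x
  proof -
    have "x \<notin> Z" using that \<open>Xp \<inter> Z = {}\<close> by blast
    with that pos obtain k where "k \<in> K" "x \<in> reached k"
      unfolding reached_def using gdist_le_iff_via_cut[OF cut \<open>c \<in> Z\<close>] by blast
    with px(2) show ?thesis by blast
  qed
  moreover have "set_option (px k) \<subseteq> Xp" for k
    using px(1) unfolding reached_def by blast
  ultimately show thesis using that ny by blast
qed

lemma cut_consistent_separates:
  assumes cut: "biclique_cut E Z P Q K" and "c \<in> Z" "(Xp \<union> Xm) \<inter> Z = {}"
    and consistent: "cut_consistent E P Q K px ny c r"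
    and px: "\<And>x. x \<in> Xp \<Longrightarrow> \<exists>k\<in>K. \<exists>x'\<in>set_option (px k). gdist_from E (Q k) x \<le> gdist_from E (Q k) x'"
    and ny: "\<And>y k. y \<in> Xm \<Longrightarrow> \<exists>y'\<in>set_option (ny k). gdist_from E (Q k) y' \<le> gdist_from E (Q k) y"
  shows "(\<forall>x\<in>Xp. gdist E c x \<le> enat r) \<and> (\<forall>y\<in>Xm. enat r < gdist E c y)"
proof (intro conjI ballI)
  fix x assume "x \<in> Xp"
  then obtain k x' where "k \<in> K" "x' \<in> set_option (px k)" "gdist_from E (Q k) x \<le> gdist_from E (Q k) x'"
    using px by blast
  then have "gdist_via E (P k) (Q k) c x \<le> gdist_via E (P k) (Q k) c x'"
    by (simp add: gdist_via_mono)
  also have "\<dots> \<le> enat r"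
    using consistent \<open>k \<in> K\<close> \<open>x' \<in> set_option (px k)\<close> unfolding cut_consistent_def by blast
  finally show "gdist E c x \<le> enat r"
    using gdist_le_iff_via_cut[OF cut \<open>c \<in> Z\<close>, of x] \<open>k \<in> K\<close> \<open>x \<in> Xp\<close> assms(3) by blast
next
  fix y assume "y \<in> Xm"
  show "enat r < gdist E c y"
  proof (rule ccontr)
    assume "\<not> enat r < gdist E c y"
    moreover have "y \<notin> Z" using \<open>y \<in> Xm\<close> assms(3) by blast
    ultimately obtain k where "k \<in> K" and le: "gdist_via E (P k) (Q k) c y \<le> enat r"
      using gdist_le_iff_via_cut[OF cut \<open>c \<in> Z\<close>] by (auto simp: not_less)
    obtain y' where "y' \<in> set_option (ny k)" "gdist_from E (Q k) y' \<le> gdist_from E (Q k) y"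
      using ny[OF \<open>y \<in> Xm\<close>] by blast
    have "enat r < gdist_via E (P k) (Q k) c y'"
      using consistent \<open>k \<in> K\<close> \<open>y' \<in> set_option (ny k)\<close> unfolding cut_consistent_def by blast
    also have "\<dots> \<le> gdist_via E (P k) (Q k) c y"
      using \<open>gdist_from E (Q k) y' \<le> gdist_from E (Q k) y\<close> by (simp add: gdist_via_mono)
    also note le
    finally show False by simp
  qed
qed

lemma cut_compression:
  assumes cut: "biclique_cut E Z P Q K" and "Xp \<union> Xm \<subseteq> V" "finite V"
    and "(Xp \<union> Xm) \<inter> Z = {}" "c \<in> Z" "realizes (ball V E c (int R)) (Xp, Xm)"
  obtains px ny where "\<And>k. set_option (px k) \<subseteq> Xp" "\<And>k. set_option (ny k) \<subseteq> Xm"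
    and "cut_consistent E P Q K px ny c R"
    and "\<And>c' r. c' \<in> Z \<Longrightarrow> cut_consistent E P Q K px ny c' r \<Longrightarrow> realizes (ball V E c' (int r)) (Xp, Xm)"
proof -
  have "finite Xp" "finite Xm" using finite_subset[OF assms(2,3)] by auto
  moreover have "Xp \<inter> Z = {}" using assms(4) by blast
  moreover have pos: "\<forall>x\<in>Xp. gdist E c x \<le> enat R" and neg: "\<forall>y\<in>Xm. enat R < gdist E c y"
    using assms(6) realizes_ball_iff[OF assms(2)] by blast+
  ultimately obtain px ny where ranges: "\<And>k. set_option (px k) \<subseteq> Xp" "\<And>k. set_option (ny k) \<subseteq> Xm"
    and "cut_consistent E P Q K px ny c R"
    and px: "\<And>x. x \<in> Xp \<Longrightarrow> \<exists>k\<in>K. \<exists>x'\<in>set_option (px k). gdist_from E (Q k) x \<le> gdist_from E (Q k) x'"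
    and ny: "\<And>y k. y \<in> Xm \<Longrightarrow> \<exists>y'\<in>set_option (ny k). gdist_from E (Q k) y' \<le> gdist_from E (Q k) y"
    by (rule cut_witnesses_exist[OF cut _ _ \<open>c \<in> Z\<close>]) (rule that)
  moreover have "realizes (ball V E c' (int r)) (Xp, Xm)"
    if "c' \<in> Z" "cut_consistent E P Q K px ny c' r" for c' r
    using cut_consistent_separates[OF cut that(1) assms(4) that(2) px ny] realizes_ball_iff[OF assms(2)] by blast
  ultimately show thesis using that by blast
qed

section \<open>Laminar hierarchies\<close>

locale laminar_hierarchy =
  fixes V :: "'a set" and NN :: "'a set set"
  assumes finite_V: "finite V"
    and nodes_subset: "NN \<subseteq> Pow V"
    and top_node: "V \<in> NN"
    and empty_not_node: "{} \<notin> NN"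
    and laminar: "\<And>N M. N \<in> NN \<Longrightarrow> M \<in> NN \<Longrightarrow> N \<subseteq> M \<or> M \<subseteq> N \<or> N \<inter> M = {}"
    and binary: "\<And>N. N \<in> NN \<Longrightarrow> 2 \<le> card N \<Longrightarrow> \<exists>N1\<in>NN. \<exists>N2\<in>NN. N1 \<inter> N2 = {} \<and> N = N1 \<union> N2"
begin

lemma finite_node: "N \<in> NN \<Longrightarrow> finite N"
  using nodes_subset finite_V by (blast intro: finite_subset)

lemma node_subset_if_card_le:
  assumes "N \<in> NN" "M \<in> NN" "x \<in> N" "x \<in> M" "card N \<le> card M"
  shows "N \<subseteq> M"
proof -
  have "M \<subseteq> N \<Longrightarrow> M = N"
    using card_seteq[OF finite_node[OF assms(1)]] assms(5) by blast
  then show ?thesis using laminar[OF assms(1,2)] assms(3,4) by blast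
qed

lemma node_split:
  assumes "N \<in> NN" "2 \<le> card N"
  obtains N1 N2 where "N1 \<in> NN" "N2 \<in> NN" "N1 \<inter> N2 = {}" "N = N1 \<union> N2"
    "card N1 < card N" "card N2 < card N"
proof -
  obtain N1 N2 where N12: "N1 \<in> NN" "N2 \<in> NN" "N1 \<inter> N2 = {}" "N = N1 \<union> N2"
    using binary[OF assms] by blast
  then have "N1 \<noteq> {}" "N2 \<noteq> {}" using empty_not_node by auto
  with N12 have "N1 \<subset> N" "N2 \<subset> N" by auto
  then have "card N1 < card N" "card N2 < card N"
    using finite_node[OF assms(1)] by (simp_all add: psubset_card_mono)
  with N12 show thesis using that by blast
qed

definition smallest_node :: "('a set \<Rightarrow> bool) \<Rightarrow> 'a set" where
  "smallest_node P = arg_min card (\<lambda>N. N \<in> NN \<and> P N)"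

definition largest_node :: "('a set \<Rightarrow> bool) \<Rightarrow> 'a set" where
  "largest_node P = arg_max card (\<lambda>N. N \<in> NN \<and> P N)"

lemma smallest_node_spec:
  assumes "N \<in> NN" "P N"
  shows "smallest_node P \<in> NN" "P (smallest_node P)" "card (smallest_node P) \<le> card N"
  using arg_min_nat_lemma[of "\<lambda>N. N \<in> NN \<and> P N" N card] assms
  unfolding smallest_node_def by auto

lemma largest_node_spec:
  assumes "N \<in> NN" "P N"
  shows "largest_node P \<in> NN" "P (largest_node P)" "card N \<le> card (largest_node P)"
proof -
  have "card M < Suc (card V)" if "M \<in> NN" for M
    using that nodes_subset finite_V by (simp add: card_mono le_imp_less_Suc subset_eq)
  then show "largest_node P \<in> NN" "P (largest_node P)" "card N \<le> card (largest_node P)"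
    using arg_max_nat_lemma[of "\<lambda>N. N \<in> NN \<and> P N" N card "Suc (card V)"] assms
    unfolding largest_node_def by auto
qed

definition lca :: "'a \<Rightarrow> 'a \<Rightarrow> 'a set" where
  "lca x y = smallest_node (\<lambda>N. x \<in> N \<and> y \<in> N)"

definition largest_avoiding :: "'a \<Rightarrow> 'a option \<Rightarrow> 'a set" where
  "largest_avoiding x zo = largest_node (\<lambda>N. x \<in> N \<and> set_option zo \<inter> N = {})"

lemma lca_of_set:
  assumes "S \<subseteq> V" "S \<noteq> {}"
  obtains z1 z2 where "z1 \<in> S" "z2 \<in> S" "lca z1 z2 = smallest_node (\<lambda>N. S \<subseteq> N)"
proof -
  define B where "B = smallest_node (\<lambda>N. S \<subseteq> N)"
  have B: "B \<in> NN" "S \<subseteq> B" "\<And>M. M \<in> NN \<Longrightarrow> S \<subseteq> M \<Longrightarrow> card B \<le> card M"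
    unfolding B_def using smallest_node_spec[OF top_node, of "\<lambda>N. S \<subseteq> N"] assms(1)
    by (auto intro: smallest_node_spec(3))
  have lca_sub: "lca z1 z2 \<subseteq> B" "z1 \<in> lca z1 z2" "z2 \<in> lca z1 z2" "lca z1 z2 \<in> NN"
    if "z1 \<in> S" "z2 \<in> S" for z1 z2
  proof -
    have z12: "z1 \<in> B \<and> z2 \<in> B" using that B(2) by blast
    note lca = smallest_node_spec[OF B(1), of "\<lambda>N. z1 \<in> N \<and> z2 \<in> N", OF z12, folded lca_def]
    then show "lca z1 z2 \<in> NN" "z1 \<in> lca z1 z2" "z2 \<in> lca z1 z2" by auto
    with lca(3) z12 show "lca z1 z2 \<subseteq> B" using node_subset_if_card_le[OF _ B(1)] by blast
  qed
  show thesis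
  proof (cases "2 \<le> card B")
    case False
    obtain s where "s \<in> S" using assms(2) by blast
    moreover have "card B \<le> Suc 0" using False by simp
    ultimately have "B = {s}"
      using B(2) finite_node[OF B(1)] by (auto simp: card_le_Suc0_iff_eq)
    with lca_sub[OF \<open>s \<in> S\<close> \<open>s \<in> S\<close>] have "lca s s = B" by blast
    with \<open>s \<in> S\<close> show thesis using that B_def by blast
  next
    case True
    then obtain N1 N2 where N: "N1 \<in> NN" "N2 \<in> NN" "N1 \<inter> N2 = {}" "B = N1 \<union> N2"
      "card N1 < card B" "card N2 < card B"
      by (rule node_split[OF B(1)])
    have "\<not> S \<subseteq> N1" using B(3)[OF N(1)] N(5) by (meson leD)
    moreover have "\<not> S \<subseteq> N2" using B(3)[OF N(2)] N(6) by (meson leD)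
    ultimately obtain z1 z2 where z: "z1 \<in> S" "z1 \<notin> N1" "z2 \<in> S" "z2 \<notin> N2" by blast
    with N(4) B(2) have "z1 \<in> N2" "z2 \<in> N1" by blast+
    have "N1 \<subseteq> lca z1 z2"
      using laminar[OF N(1) lca_sub(4)[OF z(1,3)]] lca_sub(2,3)[OF z(1,3)] \<open>z2 \<in> N1\<close> z(2) by blast
    moreover have "N2 \<subseteq> lca z1 z2"
      using laminar[OF N(2) lca_sub(4)[OF z(1,3)]] lca_sub(2,3)[OF z(1,3)] \<open>z1 \<in> N2\<close> z(4) by blast
    ultimately have "lca z1 z2 = B" using N(4) lca_sub(1)[OF z(1,3)] by blast
    with z show thesis using that B_def by blast
  qed
qed

lemma largest_avoiding_None:
  assumes "x \<in> V"
  shows "largest_avoiding x None = V"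
proof -
  from largest_node_spec[OF top_node, of "\<lambda>N. x \<in> N \<and> set_option None \<inter> N = {}"] assms
  have "largest_avoiding x None \<in> NN" "card V \<le> card (largest_avoiding x None)"
    unfolding largest_avoiding_def by auto
  then show ?thesis
    using nodes_subset card_seteq[OF finite_V] by blast
qed

lemma largest_avoiding_Some:
  assumes "A \<in> NN" "A \<noteq> V" "x \<in> A" "z \<in> smallest_node (\<lambda>N. A \<subset> N)" "z \<notin> A"
  shows "largest_avoiding x (Some z) = A"
proof -
  define A' where "A' = smallest_node (\<lambda>N. A \<subset> N)"
  have "A \<subset> V" using assms(1,2) nodes_subset by blast
  then have A': "A' \<in> NN" "A \<subset> A'" "\<And>M. M \<in> NN \<Longrightarrow> A \<subset> M \<Longrightarrow> card A' \<le> card M"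
    unfolding A'_def using smallest_node_spec[OF top_node, of "\<lambda>N. A \<subset> N"] smallest_node_spec(3) by auto
  define M where "M = largest_avoiding x (Some z)"
  have M: "M \<in> NN" "x \<in> M" "z \<notin> M" "card A \<le> card M"
    unfolding M_def largest_avoiding_def
    using largest_node_spec[OF assms(1), of "\<lambda>N. x \<in> N \<and> set_option (Some z) \<inter> N = {}"] assms(3,5) by auto
  then have "A \<subseteq> M" using node_subset_if_card_le assms(1,3) by blast
  moreover have "\<not> A \<subset> M"
  proof
    assume "A \<subset> M"
    then have "A' \<subseteq> M"
      using node_subset_if_card_le[OF A'(1) M(1)] A'(2,3) M(1,2) assms(3) by blast
    with assms(4) M(3) show False unfolding A'_def by blast
  qed
  ultimately show ?thesis unfolding M_def by blast
qed

lemma smallest_node_trace_excludes: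
  assumes "P0 \<in> NN" "c \<in> P0" "c \<notin> X" "s \<in> P0 \<inter> X"
    and minimal: "\<And>M. M \<in> NN \<Longrightarrow> c \<in> M \<Longrightarrow> M \<inter> X \<noteq> {} \<Longrightarrow> card P0 \<le> card M"
  shows "c \<notin> smallest_node (\<lambda>N. P0 \<inter> X \<subseteq> N)"
proof -
  define B where "B = smallest_node (\<lambda>N. P0 \<inter> X \<subseteq> N)"
  have B: "B \<in> NN" "P0 \<inter> X \<subseteq> B"
    using smallest_node_spec(1,2)[OF assms(1), of "\<lambda>N. P0 \<inter> X \<subseteq> N"] unfolding B_def by blast+
  have avoid: "c \<notin> B" if N: "N1 \<in> NN" "N2 \<in> NN" "N1 \<inter> N2 = {}" "P0 = N1 \<union> N2"
    "card N1 < card P0" "c \<in> N1" for N1 N2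
  proof -
    have "N1 \<inter> X = {}"
    proof (rule ccontr)
      assume "N1 \<inter> X \<noteq> {}"
      with minimal[OF N(1) N(6)] N(5) show False by simp
    qed
    then have "P0 \<inter> X \<subseteq> N2" unfolding N(4) by blast
    then have "B \<subseteq> N2"
      using node_subset_if_card_le[OF B(1) N(2)] smallest_node_spec(3)[OF N(2), of "\<lambda>N. P0 \<inter> X \<subseteq> N"]
        B(2) assms(4) unfolding B_def by blast
    with N(3,6) show ?thesis by blast
  qed
  have "s \<noteq> c" "{c, s} \<subseteq> P0" using assms(2-4) by auto
  then have "2 \<le> card P0"
    using card_mono[OF finite_node[OF assms(1)], of "{c, s}"] by simp
  then obtain N1 N2 where N: "N1 \<in> NN" "N2 \<in> NN" "N1 \<inter> N2 = {}" "P0 = N1 \<union> N2"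
    "card N1 < card P0" "card N2 < card P0"
    by (rule node_split[OF assms(1)])
  have "c \<notin> B"
  proof (cases "c \<in> N1")
    case True
    with N show ?thesis by (intro avoid[of N1 N2])
  next
    case False
    with N assms(2) have "c \<in> N2" by blast
    with N show ?thesis by (intro avoid[of N2 N1]) auto
  qed
  then show ?thesis unfolding B_def .
qed

lemma ex_largest_avoiding:
  assumes "A \<in> NN" "c \<in> A" "z \<in> A"
    and maximal: "\<And>M. M \<in> NN \<Longrightarrow> c \<in> M \<Longrightarrow> M \<inter> X = A \<inter> X \<Longrightarrow> card M \<le> card A"
  obtains zo where "set_option zo \<subseteq> X" "largest_avoiding z zo = A"
proof (cases "A = V")
  case True
  then show thesis
    using that[of None] largest_avoiding_None assms(3) by simp
next
  case False
  define A' where "A' = smallest_node (\<lambda>N. A \<subset> N)"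
  have "A \<subset> V" using False assms(1) nodes_subset by blast
  note A' = smallest_node_spec[OF top_node, of "\<lambda>N. A \<subset> N", OF this, folded A'_def]
  then have "card A < card A'" using finite_node psubset_card_mono by blast
  moreover have "c \<in> A'" using assms(2) A'(2) by blast
  ultimately have "A' \<inter> X \<noteq> A \<inter> X" using maximal[OF A'(1)] by (meson leD)
  moreover have "A \<inter> X \<subseteq> A' \<inter> X" using A'(2) by blast
  ultimately obtain z3 where "z3 \<in> A'" "z3 \<in> X" "z3 \<notin> A" by blast
  with largest_avoiding_Some[OF assms(1) False assms(3)] show thesis
    using that[of "Some z3"] A'_def by simp
qed

lemma separating_nodes:
  assumes "X \<subseteq> V" "X \<noteq> {}" "c \<in> V" "c \<notin> X"
  obtains z1 z2 zo where "z1 \<in> X" "z2 \<in> X" "set_option zo \<subseteq> X"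
    "largest_avoiding z1 zo \<in> NN" "lca z1 z2 \<in> NN"
    "c \<in> largest_avoiding z1 zo - lca z1 z2" "largest_avoiding z1 zo \<inter> X \<subseteq> lca z1 z2"
proof -
  define P0 where "P0 = smallest_node (\<lambda>N. c \<in> N \<and> N \<inter> X \<noteq> {})"
  have P0: "P0 \<in> NN" "c \<in> P0" "P0 \<inter> X \<noteq> {}"
    using smallest_node_spec(1,2)[OF top_node, of "\<lambda>N. c \<in> N \<and> N \<inter> X \<noteq> {}"] assms
    unfolding P0_def by blast+
  have P0_min: "card P0 \<le> card M" if "M \<in> NN" "c \<in> M" "M \<inter> X \<noteq> {}" for M
    using smallest_node_spec(3)[OF that(1), of "\<lambda>N. c \<in> N \<and> N \<inter> X \<noteq> {}"] that unfolding P0_def by blast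
  define S where "S = P0 \<inter> X"
  have "S \<subseteq> V" "S \<noteq> {}" using S_def P0(3) assms(1) by auto
  then obtain s where "s \<in> S" by blast
  define B where "B = smallest_node (\<lambda>N. S \<subseteq> N)"
  have B: "B \<in> NN" "S \<subseteq> B" "c \<notin> B"
    using smallest_node_spec(1,2)[OF P0(1), of "\<lambda>N. S \<subseteq> N"]
      smallest_node_trace_excludes[OF P0(1,2) assms(4) \<open>s \<in> S\<close>[unfolded S_def] P0_min]
    unfolding B_def S_def by blast+
  define A where "A = largest_node (\<lambda>N. c \<in> N \<and> N \<inter> X = S)"
  have A: "A \<in> NN" "c \<in> A" "A \<inter> X = S"
    using largest_node_spec(1,2)[OF P0(1), of "\<lambda>N. c \<in> N \<and> N \<inter> X = S"] P0(2) unfolding A_def S_def by blast+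
  have A_max: "card M \<le> card A" if "M \<in> NN" "c \<in> M" "M \<inter> X = A \<inter> X" for M
    using largest_node_spec(3)[OF that(1), of "\<lambda>N. c \<in> N \<and> N \<inter> X = S"] that A(3) unfolding A_def by blast
  obtain z1 z2 where "z1 \<in> S" "z2 \<in> S" "lca z1 z2 = B"
    using lca_of_set[OF \<open>S \<subseteq> V\<close> \<open>S \<noteq> {}\<close>] B_def by blast
  moreover from this A(3) obtain zo where "set_option zo \<subseteq> X" "largest_avoiding z1 zo = A"
    using ex_largest_avoiding[OF A(1,2) _ A_max] by blast
  moreover have "A \<inter> X \<subseteq> B" using A(3) B(2) by blast
  ultimately show thesis
    using that[of z1 z2 zo] A(1,2) B(1,3) S_def by blast
qed

end

section \<open>Compression along a hierarchy with twin labels\<close>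

definition twin_labels :: "'a set \<Rightarrow> ('a \<times> 'a) set \<Rightarrow> 'a set \<Rightarrow> ('a \<Rightarrow> nat) \<Rightarrow> bool" where
  "twin_labels V E N f \<longleftrightarrow> (\<forall>u\<in>N. \<forall>u'\<in>N. f u = f u' \<longrightarrow> (\<forall>w\<in>V - N. (u, w) \<in> E \<longleftrightarrow> (u', w) \<in> E))"

text \<open>For a node \<open>N\<close> built by a subexpression, \<open>lab N\<close> records the labels of the vertices of \<open>N\<close>
  at the moment that subexpression was completed.\<close>

locale labelled_hierarchy = laminar_hierarchy V NN for V :: "'a set" and NN +
  fixes E :: "('a \<times> 'a) set" and lab :: "'a set \<Rightarrow> 'a \<Rightarrow> nat" and t :: nat
  assumes edges_subset: "E \<subseteq> V \<times> V" and sym_edges: "sym E"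
    and labels_bounded: "\<And>N. N \<in> NN \<Longrightarrow> lab N ` N \<subseteq> {1..t}"
    and twin: "\<And>N. N \<in> NN \<Longrightarrow> twin_labels V E N (lab N)"
begin

definition label_class :: "'a set \<Rightarrow> nat \<Rightarrow> 'a set" where
  "label_class N i = {u\<in>N. lab N u = i}"

definition label_nbrs :: "'a set \<Rightarrow> nat \<Rightarrow> 'a set" where
  "label_nbrs N i = {w\<in>V - N. \<exists>u\<in>label_class N i. (u, w) \<in> E}"

lemma label_biclique:
  assumes "N \<in> NN"
  shows "label_class N i \<times> label_nbrs N i \<subseteq> E"
proof clarify
  fix u w assume "u \<in> label_class N i" "w \<in> label_nbrs N i"
  then obtain u' where "u' \<in> label_class N i" "(u', w) \<in> E" "w \<in> V - N"
    unfolding label_nbrs_def by blast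
  with \<open>u \<in> label_class N i\<close> twin[OF assms] show "(u, w) \<in> E"
    unfolding twin_labels_def label_class_def by blast
qed

text \<open>The \<open>2t\<close> bicliques covering the edges that leave \<open>A - B\<close>: for \<open>k < t\<close> the edges leaving \<open>A\<close>
  from label class \<open>k + 1\<close> of \<open>A\<close>, and for \<open>k = t + i\<close> the edges entering label class \<open>i + 1\<close>
  of \<open>B\<close>.\<close>

definition cut_near :: "'a set \<Rightarrow> 'a set \<Rightarrow> nat \<Rightarrow> 'a set" where
  "cut_near A B k = (if k < t then label_class A (Suc k) else label_nbrs B (Suc (k - t)))"

definition cut_far :: "'a set \<Rightarrow> 'a set \<Rightarrow> nat \<Rightarrow> 'a set" where
  "cut_far A B k = (if k < t then label_nbrs A (Suc k) else label_class B (Suc (k - t)))"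

lemma biclique_cut_nodes:
  assumes "A \<in> NN" "B \<in> NN"
  shows "biclique_cut E (A - B) (cut_near A B) (cut_far A B) {..<2 * t}"
  unfolding biclique_cut_def
proof (intro conjI ballI allI impI)
  fix k
  have "label_nbrs B i \<times> label_class B i \<subseteq> E" for i
    using label_biclique[OF assms(2), of i] sym_edges by (auto elim: symE)
  then show "cut_near A B k \<times> cut_far A B k \<subseteq> E"
    using label_biclique[OF assms(1)] unfolding cut_near_def cut_far_def by simp
next
  fix z y assume "z \<in> A - B" "y \<notin> A - B" "(z, y) \<in> E"
  then have "y \<in> V" "z \<in> V" using edges_subset by blast+
  show "\<exists>k\<in>{..<2 * t}. z \<in> cut_near A B k \<and> y \<in> cut_far A B k"
  proof (cases "y \<in> A")
    case False
    obtain k where "lab A z = Suc k" "k < t"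
      using labels_bounded[OF assms(1)] \<open>z \<in> A - B\<close> by (cases "lab A z") force+
    with False \<open>y \<in> V\<close> \<open>z \<in> A - B\<close> \<open>(z, y) \<in> E\<close> show ?thesis
      by (intro bexI[of _ k]) (auto simp: cut_near_def cut_far_def label_class_def label_nbrs_def)
  next
    case True
    with \<open>y \<notin> A - B\<close> have "y \<in> B" by blast
    obtain i where "lab B y = Suc i" "i < t"
      using labels_bounded[OF assms(2)] \<open>y \<in> B\<close> by (cases "lab B y") force+
    moreover have "(y, z) \<in> E" using \<open>(z, y) \<in> E\<close> sym_edges by (auto elim: symE)
    ultimately show ?thesis using \<open>y \<in> B\<close> \<open>z \<in> V\<close> \<open>z \<in> A - B\<close>
      by (intro bexI[of _ "t + i"]) (auto simp: cut_near_def cut_far_def label_class_def label_nbrs_def)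
  qed
qed

definition consistent_ball :: "'a set \<Rightarrow> 'a set \<Rightarrow> (nat \<Rightarrow> 'a option) \<Rightarrow> (nat \<Rightarrow> 'a option) \<Rightarrow> 'a set" where
  "consistent_ball A B px ny =
     (let (c, r) = SOME (c, r). c \<in> A - B \<and> cut_consistent E (cut_near A B) (cut_far A B) {..<2 * t} px ny c r
      in ball V E c (int r))"

text \<open>Array layout: \<open>z1\<close>, \<open>z2\<close>, \<open>zo\<close> name the nodes \<open>A\<close> and \<open>B\<close>, followed by the \<open>2t\<close> positive and
  the \<open>2t\<close> negative witnesses; an array starting with \<open>None\<close> stores a centre lying in the sample
  and the farthest positive point. If no consistent centre exists, \<open>SOME\<close> still returns a ball,
  so every array decodes to a hyperedge.\<close>

definition decode :: "'a option list \<Rightarrow> 'a set" where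
  "decode a = (case a of
      Some z1 # Some z2 # zo # ws \<Rightarrow>
        consistent_ball (largest_avoiding z1 zo) (lca z1 z2) (\<lambda>k. ws ! k) (\<lambda>k. ws ! (2 * t + k))
    | None # Some c # Some x # _ \<Rightarrow> ball V E c (int (the_enat (gdist E c x)))
    | _ \<Rightarrow> {})"

lemma decode_in_ball_hyperedges: "decode a \<in> ball_hyperedges V E"
proof -
  have "V \<noteq> {}" using top_node empty_not_node by blast
  note hyperedges = empty_in_ball_hyperedges[OF this] ball_in_ball_hyperedges[OF this edges_subset]
  then show ?thesis
    unfolding decode_def consistent_ball_def
    by (simp split: list.split option.split prod.split)
qed

lemma compress_center:
  assumes "Xp \<union> Xm \<subseteq> V" "c \<in> Xp" "realizes (ball V E c (int R)) (Xp, Xm)"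
  shows "\<exists>a\<in>arrays (4 * t + 3) (Xp \<union> Xm). realizes (decode a) (Xp, Xm)"
proof -
  have pos: "\<forall>x\<in>Xp. gdist E c x \<le> enat R" and neg: "\<forall>y\<in>Xm. enat R < gdist E c y"
    using assms(3) realizes_ball_iff[OF assms(1)] by blast+
  have "finite Xp" using assms(1) finite_V finite_subset by blast
  with assms(2) have "Max (gdist E c ` Xp) \<in> gdist E c ` Xp" by (intro Max_in) auto
  then obtain xm where "xm \<in> Xp" and xm: "gdist E c xm = Max (gdist E c ` Xp)" by auto
  with \<open>finite Xp\<close> have far: "gdist E c x \<le> gdist E c xm" if "x \<in> Xp" for x
    using that by simp
  obtain D where D: "gdist E c xm = enat D" "D \<le> R"
    using pos \<open>xm \<in> Xp\<close> by (cases "gdist E c xm") auto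
  define a where "a = None # Some c # Some xm # replicate (4 * t) None"
  have "a \<in> arrays (4 * t + 3) (Xp \<union> Xm)"
    unfolding a_def arrays_def using assms(2) \<open>xm \<in> Xp\<close> by auto
  moreover have "decode a = ball V E c (int D)" unfolding a_def decode_def using D by simp
  moreover have "realizes (ball V E c (int D)) (Xp, Xm)"
    unfolding realizes_ball_iff[OF assms(1)]
  proof (intro conjI ballI)
    fix x assume "x \<in> Xp"
    with far D(1) show "gdist E c x \<le> enat D" by metis
  next
    fix y assume "y \<in> Xm"
    with neg have "enat R < gdist E c y" by blast
    with D(2) show "enat D < gdist E c y" by (meson enat_ord_simps(1) le_less_trans)
  qed
  ultimately show ?thesis by (intro bexI[of _ a]) simp_all
qed

lemma consistent_ball_realizes:
  assumes "c \<in> A - B" "cut_consistent E (cut_near A B) (cut_far A B) {..<2 * t} px ny c r"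
    and "\<And>c' r'. c' \<in> A - B \<Longrightarrow> cut_consistent E (cut_near A B) (cut_far A B) {..<2 * t} px ny c' r'
      \<Longrightarrow> realizes (ball V E c' (int r')) X"
  shows "realizes (consistent_ball A B px ny) X"
proof -
  let ?P = "\<lambda>(c', r'). c' \<in> A - B \<and> cut_consistent E (cut_near A B) (cut_far A B) {..<2 * t} px ny c' r'"
  have "?P (c, r)" using assms(1,2) by simp
  then have chosen: "?P (SOME p. ?P p)" by (rule someI)
  obtain c' r' where "(SOME p. ?P p) = (c', r')" by (cases "SOME p. ?P p")
  with chosen assms(3) show ?thesis unfolding consistent_ball_def by simp
qed

lemma compress_outside:
  assumes "Xp \<union> Xm \<subseteq> V" "Xp \<union> Xm \<noteq> {}" "c \<in> V" "c \<notin> Xp \<union> Xm"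
    and "realizes (ball V E c (int R)) (Xp, Xm)"
  shows "\<exists>a\<in>arrays (4 * t + 3) (Xp \<union> Xm). realizes (decode a) (Xp, Xm)"
proof -
  obtain z1 z2 zo where z: "z1 \<in> Xp \<union> Xm" "z2 \<in> Xp \<union> Xm" "set_option zo \<subseteq> Xp \<union> Xm"
    and nodes: "largest_avoiding z1 zo \<in> NN" "lca z1 z2 \<in> NN"
    and c: "c \<in> largest_avoiding z1 zo - lca z1 z2"
    and trace: "largest_avoiding z1 zo \<inter> (Xp \<union> Xm) \<subseteq> lca z1 z2"
    using separating_nodes[OF assms(1-4)] by blast
  define A B where "A = largest_avoiding z1 zo" and "B = lca z1 z2"
  note cut = biclique_cut_nodes[OF nodes, folded A_def B_def]
  have "(Xp \<union> Xm) \<inter> (A - B) = {}" using trace unfolding A_def B_def by blast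
  then obtain px ny where ranges: "\<And>k. set_option (px k) \<subseteq> Xp" "\<And>k. set_option (ny k) \<subseteq> Xm"
    and consistent: "cut_consistent E (cut_near A B) (cut_far A B) {..<2 * t} px ny c R"
    and decodes: "\<And>c' r. c' \<in> A - B \<Longrightarrow> cut_consistent E (cut_near A B) (cut_far A B) {..<2 * t} px ny c' r
      \<Longrightarrow> realizes (ball V E c' (int r)) (Xp, Xm)"
    using cut_compression[OF cut assms(1) finite_V _ _ assms(5)] c A_def B_def by blast
  define ws where "ws = map px [0..<2 * t] @ map ny [0..<2 * t]"
  define a where "a = Some z1 # Some z2 # zo # ws"
  have "a \<in> arrays (4 * t + 3) (Xp \<union> Xm)"
  proof -
    have "px k \<in> Some ` (Xp \<union> Xm) \<union> {None}" "ny k \<in> Some ` (Xp \<union> Xm) \<union> {None}" for k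
      using ranges[of k] by (intro option_in_alphabet; blast)+
    moreover have "zo \<in> Some ` (Xp \<union> Xm) \<union> {None}" using z(3) by (rule option_in_alphabet)
    ultimately show ?thesis
      using z(1,2) unfolding a_def ws_def arrays_def by (simp add: image_subset_iff)
  qed
  moreover have "realizes (decode a) (Xp, Xm)"
  proof -
    have "cut_consistent E (cut_near A B) (cut_far A B) {..<2 * t} (\<lambda>k. ws ! k) (\<lambda>k. ws ! (2 * t + k)) c' r =
        cut_consistent E (cut_near A B) (cut_far A B) {..<2 * t} px ny c' r" for c' r
      by (rule cut_consistent_cong) (simp_all add: ws_def nth_append)
    then have "decode a = consistent_ball A B px ny"
      unfolding a_def decode_def consistent_ball_def A_def B_def by simp
    moreover have "c \<in> A - B" using c unfolding A_def B_def .
    then have "realizes (consistent_ball A B px ny) (Xp, Xm)"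
      by (rule consistent_ball_realizes[OF _ consistent decodes])
    ultimately show ?thesis by simp
  qed
  ultimately show ?thesis by blast
qed

lemma compress:
  assumes "(Xp, Xm) \<in> samples V (ball_hyperedges V E)"
  shows "\<exists>a\<in>arrays (4 * t + 3) (Xp \<union> Xm). realizes (decode a) (Xp, Xm)"
proof -
  obtain c r where "c \<in> V" "Xp \<union> Xm \<subseteq> V" and realized: "realizes (ball V E c r) (Xp, Xm)"
    using assms unfolding samples_def ball_hyperedges_def realizes_def by (auto simp: Int_commute)
  show ?thesis
  proof (cases "Xp = {}")
    case True
    have "replicate (4 * t + 3) None \<in> arrays (4 * t + 3) (Xp \<union> Xm)" unfolding arrays_def by auto
    moreover have "decode (replicate (4 * t + 3) None) = {}"
      unfolding decode_def by (simp add: numeral_3_eq_3)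
    ultimately show ?thesis using True unfolding realizes_def by force
  next
    case False
    then have "0 \<le> r" using realized unfolding realizes_def ball_def by auto
    then have realized_nat: "realizes (ball V E c (int (nat r))) (Xp, Xm)" using realized by simp
    have "c \<in> ball V E c (int (nat r))" using \<open>c \<in> V\<close> unfolding ball_def by (auto intro!: exI[of _ 0])
    then have "c \<notin> Xm" using realized_nat unfolding realizes_def by auto
    then consider "c \<in> Xp" | "c \<notin> Xp \<union> Xm" by blast
    then show ?thesis
    proof cases
      case 1
      with compress_center \<open>Xp \<union> Xm \<subseteq> V\<close> realized_nat show ?thesis by blast
    next
      case 2
      with compress_outside \<open>Xp \<union> Xm \<subseteq> V\<close> \<open>c \<in> V\<close> realized_nat False show ?thesis by blast
    qed
  qed
qed

end

section \<open>Clique-width expressions\<close>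

text \<open>Relabelling acts on whole label classes, so after \<open>N\<close> is completed the current labels on \<open>N\<close>
  stay a function of \<open>lab N\<close>.\<close>

definition factors_through_labels :: "'a set set \<Rightarrow> ('a set \<Rightarrow> 'a \<Rightarrow> nat) \<Rightarrow> ('a \<Rightarrow> nat) \<Rightarrow> bool" where
  "factors_through_labels NN lab l \<longleftrightarrow> (\<forall>N\<in>NN. \<exists>g. \<forall>u\<in>N. l u = g (lab N u))"

lemma laminar_hierarchy_singleton: "laminar_hierarchy {v} {{v}}"
  by unfold_locales auto

lemma laminar_hierarchy_union:
  assumes "laminar_hierarchy V1 NN1" "laminar_hierarchy V2 NN2" "V1 \<inter> V2 = {}"
  shows "laminar_hierarchy (V1 \<union> V2) (insert (V1 \<union> V2) (NN1 \<union> NN2))"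
proof -
  interpret H1: laminar_hierarchy V1 NN1 by fact
  interpret H2: laminar_hierarchy V2 NN2 by fact
  have sub1: "N \<subseteq> V1" if "N \<in> NN1" for N using that H1.nodes_subset by blast
  have sub2: "N \<subseteq> V2" if "N \<in> NN2" for N using that H2.nodes_subset by blast
  show ?thesis
  proof
    show "finite (V1 \<union> V2)" using H1.finite_V H2.finite_V by simp
    show "insert (V1 \<union> V2) (NN1 \<union> NN2) \<subseteq> Pow (V1 \<union> V2)" using sub1 sub2 by blast
    show "V1 \<union> V2 \<in> insert (V1 \<union> V2) (NN1 \<union> NN2)" by simp
    show "{} \<notin> insert (V1 \<union> V2) (NN1 \<union> NN2)"
      using H1.top_node H1.empty_not_node H2.empty_not_node by auto
  next
    fix N M assume "N \<in> insert (V1 \<union> V2) (NN1 \<union> NN2)" "M \<in> insert (V1 \<union> V2) (NN1 \<union> NN2)"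
    then consider "N = V1 \<union> V2" | "M = V1 \<union> V2" | "N \<in> NN1" "M \<in> NN1" | "N \<in> NN2" "M \<in> NN2"
      | "N \<in> NN1" "M \<in> NN2" | "N \<in> NN2" "M \<in> NN1" by blast
    then show "N \<subseteq> M \<or> M \<subseteq> N \<or> N \<inter> M = {}"
    proof cases
      case 1 then show ?thesis using \<open>M \<in> insert (V1 \<union> V2) (NN1 \<union> NN2)\<close> sub1 sub2 by blast
    next
      case 2 then show ?thesis using \<open>N \<in> insert (V1 \<union> V2) (NN1 \<union> NN2)\<close> sub1 sub2 by blast
    next
      case 3 then show ?thesis by (rule H1.laminar)
    next
      case 4 then show ?thesis by (rule H2.laminar)
    next
      case 5 then show ?thesis using sub1 sub2 assms(3) by blast
    next
      case 6 then show ?thesis using sub1 sub2 assms(3) by blast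
    qed
  next
    fix N assume N: "N \<in> insert (V1 \<union> V2) (NN1 \<union> NN2)" "2 \<le> card N"
    show "\<exists>N1\<in>insert (V1 \<union> V2) (NN1 \<union> NN2). \<exists>N2\<in>insert (V1 \<union> V2) (NN1 \<union> NN2). N1 \<inter> N2 = {} \<and> N = N1 \<union> N2"
    proof (cases "N = V1 \<union> V2")
      case True
      then show ?thesis using H1.top_node H2.top_node assms(3) by blast
    next
      case False
      with N H1.binary H2.binary show ?thesis by blast
    qed
  qed
qed

lemma twin_labels_disjoint_union:
  assumes "twin_labels V1 E1 N f" "N \<subseteq> V1" "E1 \<subseteq> V1 \<times> V1" "E2 \<subseteq> V2 \<times> V2" "V1 \<inter> V2 = {}"
  shows "twin_labels (V1 \<union> V2) (E1 \<union> E2) N f"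
  unfolding twin_labels_def
proof (intro ballI impI)
  fix u u' w assume "u \<in> N" "u' \<in> N" "f u = f u'" "w \<in> V1 \<union> V2 - N"
  with assms(2,4,5) have "(u, w) \<notin> E2" "(u', w) \<notin> E2" by blast+
  moreover have "(u, w) \<in> E1 \<longleftrightarrow> (u', w) \<in> E1"
  proof (cases "w \<in> V1")
    case True
    with assms(1) \<open>u \<in> N\<close> \<open>u' \<in> N\<close> \<open>f u = f u'\<close> \<open>w \<in> V1 \<union> V2 - N\<close> show ?thesis
      unfolding twin_labels_def by blast
  next
    case False
    with assms(3) show ?thesis by blast
  qed
  ultimately show "(u, w) \<in> E1 \<union> E2 \<longleftrightarrow> (u', w) \<in> E1 \<union> E2" by blast
qed

lemma labelled_node_of_union:
  assumes "labelled_hierarchy V1 NN1 E1 lab1 k" "factors_through_labels NN1 lab1 l1"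
    and "E2 \<subseteq> V2 \<times> V2" "V1 \<inter> V2 = {}" "N \<in> NN1" "\<forall>x\<in>V1. l x = l1 x"
  shows "twin_labels (V1 \<union> V2) (E1 \<union> E2) N (lab1 N) \<and> (\<exists>g. \<forall>u\<in>N. l u = g (lab1 N u))"
proof -
  interpret L1: labelled_hierarchy V1 NN1 E1 lab1 k by fact
  have "N \<subseteq> V1" using assms(5) L1.nodes_subset by blast
  have "\<exists>g. \<forall>u\<in>N. l1 u = g (lab1 N u)"
    using assms(2,5) unfolding factors_through_labels_def by (rule bspec)
  then obtain g where "\<forall>u\<in>N. l1 u = g (lab1 N u)" ..
  with \<open>N \<subseteq> V1\<close> assms(6) have "\<forall>u\<in>N. l u = g (lab1 N u)" by auto
  moreover have "twin_labels (V1 \<union> V2) (E1 \<union> E2) N (lab1 N)"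
    using twin_labels_disjoint_union[OF L1.twin[OF assms(5)] \<open>N \<subseteq> V1\<close> L1.edges_subset assms(3,4)] .
  ultimately show ?thesis by blast
qed

lemma labelled_hierarchy_union:
  assumes H1: "labelled_hierarchy V1 NN1 E1 lab1 k" "factors_through_labels NN1 lab1 l1" "l1 ` V1 \<subseteq> {1..k}"
    and H2: "labelled_hierarchy V2 NN2 E2 lab2 k" "factors_through_labels NN2 lab2 l2" "l2 ` V2 \<subseteq> {1..k}"
    and disjoint: "V1 \<inter> V2 = {}"
  defines "l \<equiv> \<lambda>x. if x \<in> V1 then l1 x else l2 x"
    and "NN \<equiv> insert (V1 \<union> V2) (NN1 \<union> NN2)"
    and "lab \<equiv> \<lambda>N. if N = V1 \<union> V2 then (\<lambda>x. if x \<in> V1 then l1 x else l2 x)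
      else if N \<subseteq> V1 then lab1 N else lab2 N"
  shows "labelled_hierarchy (V1 \<union> V2) NN (E1 \<union> E2) lab k \<and> factors_through_labels NN lab l"
proof -
  interpret L1: labelled_hierarchy V1 NN1 E1 lab1 k by fact
  interpret L2: labelled_hierarchy V2 NN2 E2 lab2 k by fact
  have "V1 \<noteq> {}" "V2 \<noteq> {}" using L1.top_node L1.empty_not_node L2.top_node L2.empty_not_node by auto
  let ?node_ok = "\<lambda>N. lab N ` N \<subseteq> {1..k} \<and> twin_labels (V1 \<union> V2) (E1 \<union> E2) N (lab N) \<and>
    (\<exists>g. \<forall>u\<in>N. l u = g (lab N u))"
  have ok1: "?node_ok N" if "N \<in> NN1" for N
  proof -
    have "N \<subseteq> V1" using that L1.nodes_subset by blast
    with \<open>V2 \<noteq> {}\<close> disjoint have "lab N = lab1 N" unfolding lab_def by auto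
    moreover have "\<forall>x\<in>V1. l x = l1 x" unfolding l_def by simp
    ultimately show ?thesis
      using labelled_node_of_union[OF H1(1,2) L2.edges_subset disjoint that, of l] L1.labels_bounded[OF that]
      by simp
  qed
  have ok2: "?node_ok N" if "N \<in> NN2" for N
  proof -
    have "N \<subseteq> V2" "N \<noteq> {}" using that L2.nodes_subset L2.empty_not_node by blast+
    with \<open>V1 \<noteq> {}\<close> disjoint have "lab N = lab2 N" unfolding lab_def by auto
    moreover have "\<forall>x\<in>V2. l x = l2 x" using disjoint unfolding l_def by auto
    moreover have "V2 \<inter> V1 = {}" using disjoint by blast
    ultimately show ?thesis
      using labelled_node_of_union[OF H2(1,2) L1.edges_subset _ that, of l] L2.labels_bounded[OF that]
      by (simp add: Un_commute)
  qed
  have "lab (V1 \<union> V2) = l" unfolding lab_def l_def by simp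
  then have ok_top: "?node_ok (V1 \<union> V2)"
    using H1(3) H2(3) unfolding twin_labels_def l_def by auto
  have "?node_ok N" if "N \<in> NN" for N
    using that ok1 ok2 ok_top unfolding NN_def by blast
  moreover have "laminar_hierarchy (V1 \<union> V2) NN"
    unfolding NN_def using L1.laminar_hierarchy_axioms L2.laminar_hierarchy_axioms disjoint
    by (rule laminar_hierarchy_union)
  moreover have "E1 \<union> E2 \<subseteq> (V1 \<union> V2) \<times> (V1 \<union> V2)"
    using L1.edges_subset L2.edges_subset by blast
  moreover have "sym (E1 \<union> E2)" using L1.sym_edges L2.sym_edges by (rule sym_Un)
  ultimately show ?thesis
    unfolding labelled_hierarchy_def labelled_hierarchy_axioms_def factors_through_labels_def by blast
qed

lemma labelled_hierarchy_join:
  assumes "labelled_hierarchy V NN E lab k" "factors_through_labels NN lab l"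
  shows "labelled_hierarchy V NN (E \<union> {(x, y). x \<in> V \<and> y \<in> V \<and> (l x = i \<and> l y = j \<or> l x = j \<and> l y = i)}) lab k"
    (is "labelled_hierarchy V NN (E \<union> ?J) lab k")
proof -
  interpret L: labelled_hierarchy V NN E lab k by fact
  have "twin_labels V (E \<union> ?J) N (lab N)" if "N \<in> NN" for N
    unfolding twin_labels_def
  proof (intro ballI impI)
    fix u u' w assume u: "u \<in> N" "u' \<in> N" "lab N u = lab N u'" and "w \<in> V - N"
    have "\<exists>g. \<forall>u\<in>N. l u = g (lab N u)"
      using assms(2) that unfolding factors_through_labels_def by (rule bspec)
    then obtain g where "\<forall>u\<in>N. l u = g (lab N u)" ..
    with u have "l u = l u'" by simp
    moreover have "(u, w) \<in> E \<longleftrightarrow> (u', w) \<in> E"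
      using L.twin[OF that] u \<open>w \<in> V - N\<close> unfolding twin_labels_def by blast
    moreover have "u \<in> V" "u' \<in> V" using u that L.nodes_subset by blast+
    ultimately show "(u, w) \<in> E \<union> ?J \<longleftrightarrow> (u', w) \<in> E \<union> ?J" by auto
  qed
  moreover have "E \<union> ?J \<subseteq> V \<times> V" using L.edges_subset by blast
  moreover have "sym (E \<union> ?J)"
    using L.sym_edges unfolding sym_def by blast
  ultimately show ?thesis
    using L.laminar_hierarchy_axioms L.labels_bounded
    unfolding labelled_hierarchy_def labelled_hierarchy_axioms_def by blast
qed

lemma factors_through_labels_relabel:
  assumes "factors_through_labels NN lab l"
  shows "factors_through_labels NN lab (\<lambda>x. if l x = i then j else l x)"
  unfolding factors_through_labels_def
proof
  fix N assume "N \<in> NN"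
  with assms have "\<exists>g. \<forall>u\<in>N. l u = g (lab N u)"
    unfolding factors_through_labels_def by (rule bspec)
  then obtain g where "\<forall>u\<in>N. l u = g (lab N u)" ..
  then show "\<exists>g'. \<forall>u\<in>N. (if l u = i then j else l u) = g' (lab N u)"
    by (intro exI[of _ "\<lambda>x. if g x = i then j else g x"]) simp
qed

lemma cw_build_labelled_hierarchy:
  assumes "cw_build k V E l"
  shows "l ` V \<subseteq> {1..k} \<and> (\<exists>NN lab. labelled_hierarchy V NN E lab k \<and> factors_through_labels NN lab l)"
  using assms
proof (induction rule: cw_build.induct)
  case (create i v)
  then have "labelled_hierarchy {v} {{v}} {} (\<lambda>_ _. i) k"
    using laminar_hierarchy_singleton
    by (simp add: labelled_hierarchy_def labelled_hierarchy_axioms_def twin_labels_def sym_def)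
  moreover have "factors_through_labels {{v}} (\<lambda>_ _. i) (\<lambda>_. i)"
    unfolding factors_through_labels_def by (intro ballI exI[of _ "\<lambda>x. x"]) simp
  ultimately show ?case using create by blast
next
  case (union V1 E1 l1 V2 E2 l2)
  obtain NN1 lab1 where H1: "labelled_hierarchy V1 NN1 E1 lab1 k" "factors_through_labels NN1 lab1 l1"
    using union.IH(1) by blast
  obtain NN2 lab2 where H2: "labelled_hierarchy V2 NN2 E2 lab2 k" "factors_through_labels NN2 lab2 l2"
    using union.IH(2) by blast
  note union_ok = labelled_hierarchy_union[OF H1 conjunct1[OF union.IH(1)] H2
      conjunct1[OF union.IH(2)] \<open>V1 \<inter> V2 = {}\<close>]
  have "(\<lambda>x. if x \<in> V1 then l1 x else l2 x) ` (V1 \<union> V2) \<subseteq> {1..k}"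
    using conjunct1[OF union.IH(1)] conjunct1[OF union.IH(2)] by auto
  with union_ok show ?case by blast
next
  case (join V E l i j)
  from join.IH obtain NN lab where "labelled_hierarchy V NN E lab k" "factors_through_labels NN lab l"
    by blast
  with join.IH show ?case using labelled_hierarchy_join[of V NN E lab k l i j] by blast
next
  case (relabel V E l i j)
  from relabel.IH obtain NN lab where "labelled_hierarchy V NN E lab k" "factors_through_labels NN lab l"
    by blast
  moreover have "(\<lambda>x. if l x = i then j else l x) ` V \<subseteq> {1..k}"
    using relabel.IH relabel.hyps(3) by auto
  ultimately show ?case using factors_through_labels_relabel by blast
qed

lemma cw_build_edgeless:
  assumes "finite W" "W \<noteq> {}" "f ` W \<subseteq> {1..n}"
  shows "\<exists>l. cw_build n W {} l \<and> (\<forall>x\<in>W. l x = f x)"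
  using assms
proof (induction W rule: finite_ne_induct)
  case (singleton x)
  then have "cw_build n {x} {} (\<lambda>_. f x)" by (intro cw_build.create) simp
  then show ?case by auto
next
  case (insert x W)
  then obtain l where "cw_build n W {} l" "\<forall>y\<in>W. l y = f y" by auto
  moreover have "cw_build n {x} {} (\<lambda>_. f x)" using insert.prems by (intro cw_build.create) simp
  ultimately have "cw_build n ({x} \<union> W) ({} \<union> {}) (\<lambda>y. if y \<in> {x} then f x else l y)"
    using \<open>x \<notin> W\<close> by (intro cw_build.union) auto
  with \<open>\<forall>y\<in>W. l y = f y\<close> show ?case by (intro exI[of _ "\<lambda>y. if y \<in> {x} then f x else l y"]) auto
qed

lemma cw_build_add_edges:
  assumes "cw_build n V {} l" "inj_on l V" "l ` V \<subseteq> {1..n}"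
    and "finite F" "F \<subseteq> V \<times> V" "irrefl F"
  shows "cw_build n V (F \<union> F\<inverse>) l"
  using assms(4-6)
proof (induction F rule: finite_induct)
  case empty
  then show ?case using assms(1) by simp
next
  case (insert p F)
  obtain x y where p: "p = (x, y)" by fastforce
  with insert.prems have "x \<in> V" "y \<in> V" "x \<noteq> y" by (auto simp: irrefl_def)
  then have "l x \<noteq> l y" "l x \<in> {1..n}" "l y \<in> {1..n}" using assms(2,3) by (auto dest: inj_onD)
  moreover have "cw_build n V (F \<union> F\<inverse>) l" using insert by (simp add: irrefl_def)
  ultimately have "cw_build n V (F \<union> F\<inverse> \<union>
      {(a, b). a \<in> V \<and> b \<in> V \<and> (l a = l x \<and> l b = l y \<or> l a = l y \<and> l b = l x)}) l"
    by (intro cw_build.join) simp_all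
  moreover have "{(a, b). a \<in> V \<and> b \<in> V \<and> (l a = l x \<and> l b = l y \<or> l a = l y \<and> l b = l x)} = {(x, y), (y, x)}"
    using \<open>x \<in> V\<close> \<open>y \<in> V\<close> assms(2) by (auto dest: inj_onD)
  moreover have "F \<union> F\<inverse> \<union> {(x, y), (y, x)} = insert p F \<union> (insert p F)\<inverse>" using p by auto
  ultimately show ?case by simp
qed

lemma cw_build_exists:
  assumes "finite_graph V E"
  shows "\<exists>k l. cw_build k V E l"
proof -
  have V: "finite V" "V \<noteq> {}" "E \<subseteq> V \<times> V" "sym E" "irrefl E"
    using assms unfolding finite_graph_def by auto
  obtain f :: "'a \<Rightarrow> nat" and n where "f ` V = {i. i < n}" "inj_on f V"
    using finite_imp_inj_to_nat_seg[OF V(1)] by blast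
  moreover have "f x < n" if "x \<in> V" for x
    using that \<open>f ` V = {i. i < n}\<close> by blast
  ultimately have "inj_on (Suc \<circ> f) V" "(Suc \<circ> f) ` V \<subseteq> {1..n}"
    by (auto simp: inj_on_def Suc_le_eq)
  moreover obtain l where "cw_build n V {} l" "\<forall>x\<in>V. l x = (Suc \<circ> f) x"
    using cw_build_edgeless[OF V(1,2) \<open>(Suc \<circ> f) ` V \<subseteq> {1..n}\<close>] by blast
  ultimately have "cw_build n V (E \<union> E\<inverse>) l"
    using V(1,3,5) finite_subset[OF V(3)]
    by (intro cw_build_add_edges) (auto simp: inj_on_def image_subset_iff)
  moreover have "E \<union> E\<inverse> = E" using V(4) by (auto simp: sym_conv_converse_eq)
  ultimately show ?thesis by auto
qed

lemma cliquewidth_attained: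
  assumes "finite_graph V E"
  shows "\<exists>l. cw_build (cliquewidth V E) V E l"
  unfolding cliquewidth_def using cw_build_exists[OF assms] by (rule LeastI_ex)

lemma labelled_hierarchy_mono:
  assumes "labelled_hierarchy V NN E lab k" "k \<le> t"
  shows "labelled_hierarchy V NN E lab t"
proof -
  interpret L: labelled_hierarchy V NN E lab k by fact
  show ?thesis
  proof (intro labelled_hierarchy.intro labelled_hierarchy_axioms.intro)
    show "laminar_hierarchy V NN" by (rule L.laminar_hierarchy_axioms)
    show "E \<subseteq> V \<times> V" by (rule L.edges_subset)
    show "sym E" by (rule L.sym_edges)
    show "lab N ` N \<subseteq> {1..t}" if "N \<in> NN" for N
      using L.labels_bounded[OF that] assms(2) by auto
    show "twin_labels V E N (lab N)" if "N \<in> NN" for N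
      using L.twin[OF that] .
  qed
qed

theorem theorem2p2:
  fixes V :: "'a set" and E :: "('a \<times> 'a) set" and t :: nat
  assumes "t \<ge> 1"
    and "finite_graph V E"
    and "cliquewidth V E \<le> t"
  shows "\<exists>\<kappa> \<rho>. proper_array_sample_compression_scheme V (ball_hyperedges V E) (4 * t + 3) \<kappa> \<rho>"
proof -
  obtain l where "cw_build (cliquewidth V E) V E l"
    using cliquewidth_attained[OF assms(2)] by blast
  then obtain NN lab where "labelled_hierarchy V NN E lab (cliquewidth V E)"
    using cw_build_labelled_hierarchy by blast
  then interpret labelled_hierarchy V NN E lab t
    using assms(3) by (rule labelled_hierarchy_mono)
  have "e \<subseteq> V" if "e \<in> ball_hyperedges V E" for e
    using that unfolding ball_hyperedges_def ball_def by blast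
  moreover have "\<exists>a\<in>arrays (4 * t + 3) (fst X \<union> snd X). realizes (decode a) X"
    if "X \<in> samples V (ball_hyperedges V E)" for X
    using compress[of "fst X" "snd X"] that by simp
  ultimately have "\<exists>\<kappa>. proper_array_sample_compression_scheme V (ball_hyperedges V E) (4 * t + 3) \<kappa> decode"
    by (rule proper_scheme_from_decoder[OF decode_in_ball_hyperedges])
  then show ?thesis by blast
qed

end
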